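(* Let $G=(V,E,w)$ be a weighted graph with $n=|V|$ vertices. Let $\mathrm{A}(G)$ be the maximum of \[\tfrac14\,\mathbb{E}_{(\mathbf{u},\mathbf{v})\sim E}\big[1-\langle f_X(\mathbf{u}),f_X(\mathbf{v})\rangle-\langle f_Y(\mathbf{u}),f_Y(\mathbf{v})\rangle-\langle f_Z(\mathbf{u}),f_Z(\mathbf{v})\rangle\big]\] over all $f_X,f_Y,f_Z:V\to S^{3n-1}$ such that $\langle f_P(v),f_Q(v)\rangle=0$ for every $v\in V$ and all distinct $P,Q\in\{X,Y,Z\}$. Then \[\mathrm{A}(G)=\max_{f:V\to S^{n-1}}\mathbb{E}_{(\mathbf{u},\mathbf{v})\sim E}\big[\tfrac14-\tfrac34\langle f(\mathbf{u}),f(\mathbf{v})\rangle\big].\]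
   Context: A weighted graph $G=(V,E,w)$ is a finite undirected graph with nonnegative edge weights summing to $1$; $(\mathbf{u},\mathbf{v})\sim E$ is a random edge drawn according to the weights. $S^{m-1}$ is the unit sphere of $\mathbb{R}^m$. *)

theory Defs
  imports "HOL-Analysis.Analysis"
begin

text \<open>A weighted graph on the finite vertex type 'v: weights w u v on ordered pairs,
  nonnegative, symmetric (undirected), summing to 1. The random edge (u,v) ~ E is
  the pair (u,v) drawn with probability w u v.\<close>

definition weighted_graph :: "('v::finite \<Rightarrow> 'v \<Rightarrow> real) \<Rightarrow> bool" where
  "weighted_graph w \<longleftrightarrow> (\<forall>u v. 0 \<le> w u v) \<and> (\<forall>u v. w u v = w v u)
     \<and> (\<Sum>u\<in>UNIV. \<Sum>v\<in>UNIV. w u v) = 1"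

definition edge_exp :: "('v::finite \<Rightarrow> 'v \<Rightarrow> real) \<Rightarrow> ('v \<Rightarrow> 'v \<Rightarrow> real) \<Rightarrow> real" where
  "edge_exp w F = (\<Sum>u\<in>UNIV. \<Sum>v\<in>UNIV. w u v * F u v)"

text \<open>A(G): vectors in S^{3n-1} are unit vectors of real^('v \<times> 3), of dimension 3n.\<close>

definition A_val :: "('v::finite \<Rightarrow> 'v \<Rightarrow> real) \<Rightarrow> real" where
  "A_val w = Sup {1/4 * edge_exp w (\<lambda>u v. 1 - fX u \<bullet> fX v - fY u \<bullet> fY v - fZ u \<bullet> fZ v) |
       (fX :: 'v \<Rightarrow> real^('v \<times> 3)) fY fZ.
       (\<forall>v. fX v \<in> sphere 0 1 \<and> fY v \<in> sphere 0 1 \<and> fZ v \<in> sphere 0 1) \<and>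
       (\<forall>v. fX v \<bullet> fY v = 0 \<and> fX v \<bullet> fZ v = 0 \<and> fY v \<bullet> fZ v = 0)}"

end

theory Submission
  imports Defs
begin

text \<open>Writing \<open>a\<^sub>P = \<bbbE>\<langle>f\<^sub>P(u), f\<^sub>P(v)\<rangle>\<close>, the objective of \<open>A(G)\<close> equals
  \<open>(1 - a\<^sub>X - a\<^sub>Y - a\<^sub>Z)/4 \<le> 1/4 - 3/4 min a\<^sub>P\<close>, and the minimising \<open>f\<^sub>P\<close> alone is a
  unit-vector assignment; its \<open>n\<close> vectors span at most \<open>n\<close> dimensions, so they can be moved
  isometrically into \<open>\<real>\<^sup>n\<close>. Conversely, a single \<open>f : V \<rightarrow> S\<^sup>n\<^sup>-\<^sup>1\<close> placed in three mutually
  orthogonal coordinate blocks of \<open>\<real>\<^sup>3\<^sup>n\<close> attains the same value in \<open>A(G)\<close>. Orthogonality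
  of the three vectors at each vertex is only needed for the latter direction.\<close>

lemma edge_exp_add:
  "edge_exp w (\<lambda>u v. F u v + G u v) = edge_exp w F + edge_exp w G"
  unfolding edge_exp_def by (simp add: distrib_left sum.distrib)

lemma edge_exp_affine:
  assumes "weighted_graph w"
  shows "edge_exp w (\<lambda>u v. a + b * F u v) = a + b * edge_exp w F"
proof -
  have "edge_exp w (\<lambda>u v. a + b * F u v) = a * (\<Sum>u\<in>UNIV. \<Sum>v\<in>UNIV. w u v) + b * edge_exp w F"
    unfolding edge_exp_def by (simp add: sum.distrib sum_distrib_left algebra_simps)
  with assms show ?thesis
    unfolding weighted_graph_def by simp
qed

lemma edge_exp_mono:
  assumes "weighted_graph w" "\<And>u v. F u v \<le> G u v"
  shows "edge_exp w F \<le> edge_exp w G"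
  using assms unfolding edge_exp_def weighted_graph_def
  by (intro sum_mono mult_left_mono) auto

lemma linear_norm_preserving_on_inner:
  fixes f :: "'a::real_inner \<Rightarrow> 'b::real_inner"
  assumes "linear f" "subspace S" "\<And>x. x \<in> S \<Longrightarrow> norm (f x) = norm x"
    and "x \<in> S" "y \<in> S"
  shows "f x \<bullet> f y = x \<bullet> y"
proof -
  have "norm (f x + f y) = norm (x + y)"
    using assms by (metis linear_add subspace_add)
  then have "(f x + f y) \<bullet> (f x + f y) = (x + y) \<bullet> (x + y)"
    by (simp add: norm_eq_sqrt_inner)
  moreover have "f x \<bullet> f x = x \<bullet> x" "f y \<bullet> f y = y \<bullet> y"
    using assms(3-5) by (simp_all add: norm_eq_sqrt_inner)
  ultimately show ?thesis
    by (simp add: inner_add_left inner_add_right inner_commute)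
qed

lemma ex_same_gram_family:
  fixes g :: "'v::finite \<Rightarrow> 'a::euclidean_space"
  obtains h :: "'v \<Rightarrow> real^'v" where "\<And>u v. h u \<bullet> h v = g u \<bullet> g v"
proof -
  let ?S = "span (range g)"
  have "dim ?S \<le> card (range g)"
    by (simp add: dim_span dim_le_card')
  also have "\<dots> \<le> dim (UNIV :: (real^'v) set)"
    by (simp add: card_image_le)
  finally obtain f :: "'a \<Rightarrow> real^'v"
    where "linear f" "\<And>x. x \<in> ?S \<Longrightarrow> norm (f x) = norm x"
    using isometry_subset_subspace[OF subspace_span subspace_UNIV] by blast
  then have "f (g u) \<bullet> f (g v) = g u \<bullet> g v" for u v
    by (intro linear_norm_preserving_on_inner[where S = ?S]) (auto intro: span_base)
  then show thesis
    by (rule that[of "f \<circ> g", unfolded comp_def])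
qed

definition vec_block :: "'k::finite \<Rightarrow> real^'n::finite \<Rightarrow> real^('n \<times> 'k)" where
  "vec_block c x = (\<chi> p. if snd p = c then x $ fst p else 0)"

lemma inner_vec_block:
  fixes x y :: "real^'n::finite"
    and c d :: "'k::finite"
  shows "vec_block c x \<bullet> vec_block d y = (if c = d then x \<bullet> y else 0)"
proof -
  have "vec_block c x \<bullet> vec_block d y
      = (\<Sum>i\<in>UNIV. \<Sum>k\<in>UNIV. (if k = c then x $ i else 0) * (if k = d then y $ i else 0))"
    unfolding vec_block_def inner_vec_def UNIV_Times_UNIV[symmetric] sum.cartesian_product
    by (simp add: case_prod_unfold)
  also have "\<dots> = (\<Sum>i\<in>UNIV. if c = d then x $ i * y $ i else 0)"
  proof (intro sum.cong refl)
    fix i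
    have "(if k = c then x $ i else 0) * (if k = d then y $ i else 0)
        = (if k = c then (if c = d then x $ i * y $ i else 0) else 0)" for k
      by simp
    then show "(\<Sum>k\<in>UNIV. (if k = c then x $ i else 0) * (if k = d then y $ i else 0))
        = (if c = d then x $ i * y $ i else 0)"
      by (simp only: sum.delta finite UNIV_I if_True)
  qed
  also have "\<dots> = (if c = d then x \<bullet> y else 0)"
    by (simp add: inner_vec_def)
  finally show ?thesis .
qed

lemma norm_vec_block: "norm (vec_block c (x::real^'n::finite) :: real^('n \<times> 'k::finite)) = norm x"
  by (simp add: norm_eq_sqrt_inner inner_vec_block)

definition triple_objectives :: "('v::finite \<Rightarrow> 'v \<Rightarrow> real) \<Rightarrow> real set" where
  "triple_objectives w = {1/4 * edge_exp w (\<lambda>u v. 1 - fX u \<bullet> fX v - fY u \<bullet> fY v - fZ u \<bullet> fZ v) |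
       (fX :: 'v \<Rightarrow> real^('v \<times> 3)) fY fZ.
       (\<forall>v. fX v \<in> sphere 0 1 \<and> fY v \<in> sphere 0 1 \<and> fZ v \<in> sphere 0 1) \<and>
       (\<forall>v. fX v \<bullet> fY v = 0 \<and> fX v \<bullet> fZ v = 0 \<and> fY v \<bullet> fZ v = 0)}"

definition unit_objectives :: "('v::finite \<Rightarrow> 'v \<Rightarrow> real) \<Rightarrow> real set" where
  "unit_objectives w = {edge_exp w (\<lambda>u v. 1/4 - 3/4 * (f u \<bullet> f v)) |
       (f :: 'v \<Rightarrow> real^'v). \<forall>v. f v \<in> sphere 0 1}"

lemma unit_family_mem_unit_objectives:
  fixes g :: "'v::finite \<Rightarrow> 'a::euclidean_space"
  assumes "weighted_graph w" "\<And>v. norm (g v) = 1"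
  shows "1/4 - 3/4 * edge_exp w (\<lambda>u v. g u \<bullet> g v) \<in> unit_objectives w"
proof -
  obtain h :: "'v \<Rightarrow> real^'v" where h: "\<And>u v. h u \<bullet> h v = g u \<bullet> g v"
    using ex_same_gram_family[where g = g] by blast
  then have "\<forall>v. h v \<in> sphere 0 1"
    using assms(2) by (simp add: norm_eq_sqrt_inner)
  moreover have "edge_exp w (\<lambda>u v. 1/4 - 3/4 * (h u \<bullet> h v))
      = 1/4 - 3/4 * edge_exp w (\<lambda>u v. g u \<bullet> g v)"
    using edge_exp_affine[OF assms(1), of "1/4" "-3/4"] h by simp
  ultimately show ?thesis
    unfolding unit_objectives_def by (intro CollectI exI[of _ h]) simp
qed

lemma unit_objectives_nonempty:
  assumes "weighted_graph w"
  shows "unit_objectives w \<noteq> {}"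
  using unit_family_mem_unit_objectives[OF assms, of "\<lambda>_. 1 :: real"] by auto

lemma unit_objectives_le_1:
  fixes w :: "'v::finite \<Rightarrow> 'v \<Rightarrow> real"
  assumes "weighted_graph w" "y \<in> unit_objectives w"
  shows "y \<le> 1"
proof -
  obtain f :: "'v \<Rightarrow> real^'v" where f: "\<forall>v. f v \<in> sphere 0 1"
    and y: "y = edge_exp w (\<lambda>u v. 1/4 - 3/4 * (f u \<bullet> f v))"
    using assms(2) unfolding unit_objectives_def by blast
  have "1/4 - 3/4 * (f u \<bullet> f v) \<le> 1 + 0 * (f u \<bullet> f v)" for u v
    using Cauchy_Schwarz_ineq2[of "f u" "f v"] f by (simp add: abs_le_iff)
  then have "y \<le> edge_exp w (\<lambda>u v. 1 + 0 * (f u \<bullet> f v))"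
    unfolding y by (rule edge_exp_mono[OF assms(1)])
  then show ?thesis
    using edge_exp_affine[OF assms(1), of 1 0] by simp
qed

lemma unit_objectives_subset_triple_objectives:
  fixes w :: "'v::finite \<Rightarrow> 'v \<Rightarrow> real"
  shows "unit_objectives w \<subseteq> triple_objectives w"
proof
  fix y
  assume "y \<in> unit_objectives w"
  then obtain f :: "'v \<Rightarrow> real^'v" where f: "\<forall>v. f v \<in> sphere 0 1"
    and y: "y = edge_exp w (\<lambda>u v. 1/4 - 3/4 * (f u \<bullet> f v))"
    unfolding unit_objectives_def by blast
  define fX fY fZ :: "'v \<Rightarrow> real^('v \<times> 3)"
    where "fX v = vec_block 1 (f v)" and "fY v = vec_block 2 (f v)" and "fZ v = vec_block 3 (f v)"
    for v
  have "y = 1/4 * edge_exp w (\<lambda>u v. 1 - fX u \<bullet> fX v - fY u \<bullet> fY v - fZ u \<bullet> fZ v)"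
    unfolding y fX_def fY_def fZ_def inner_vec_block edge_exp_def
    by (simp add: sum_distrib_left algebra_simps)
  moreover have "\<forall>v. fX v \<in> sphere 0 1 \<and> fY v \<in> sphere 0 1 \<and> fZ v \<in> sphere 0 1"
    using f by (simp add: fX_def fY_def fZ_def norm_vec_block)
  moreover have "\<forall>v. fX v \<bullet> fY v = 0 \<and> fX v \<bullet> fZ v = 0 \<and> fY v \<bullet> fZ v = 0"
    by (simp add: fX_def fY_def fZ_def inner_vec_block)
  ultimately show "y \<in> triple_objectives w"
    unfolding triple_objectives_def by blast
qed

lemma triple_objectives_dominated:
  fixes w :: "'v::finite \<Rightarrow> 'v \<Rightarrow> real"
  assumes "weighted_graph w" "x \<in> triple_objectives w"
  shows "\<exists>y\<in>unit_objectives w. x \<le> y"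
proof -
  obtain fX fY fZ :: "'v \<Rightarrow> real^('v \<times> 3)"
    where unit: "\<forall>v. fX v \<in> sphere 0 1 \<and> fY v \<in> sphere 0 1 \<and> fZ v \<in> sphere 0 1"
      and x: "x = 1/4 * edge_exp w (\<lambda>u v. 1 - fX u \<bullet> fX v - fY u \<bullet> fY v - fZ u \<bullet> fZ v)"
    using assms(2) unfolding triple_objectives_def by blast
  define a where "a g = edge_exp w (\<lambda>u v. g u \<bullet> g v)" for g :: "'v \<Rightarrow> real^('v \<times> 3)"
  have "x = 1/4 * (1 + (-1) * edge_exp w (\<lambda>u v. fX u \<bullet> fX v + fY u \<bullet> fY v + fZ u \<bullet> fZ v))"
    unfolding x edge_exp_affine[OF assms(1), symmetric] by (simp add: algebra_simps)
  then have x_eq: "x = 1/4 * (1 - a fX - a fY - a fZ)"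
    unfolding a_def edge_exp_add by simp
  consider "a fX \<le> a fY \<and> a fX \<le> a fZ" | "a fY \<le> a fX \<and> a fY \<le> a fZ"
    | "a fZ \<le> a fX \<and> a fZ \<le> a fY"
    by linarith
  then have "\<exists>g\<in>{fX, fY, fZ}. 3 * a g \<le> a fX + a fY + a fZ"
    by cases auto
  then obtain g where "g \<in> {fX, fY, fZ}" "3 * a g \<le> a fX + a fY + a fZ" ..
  moreover from this have "1/4 - 3/4 * a g \<in> unit_objectives w"
    using unit unfolding a_def by (intro unit_family_mem_unit_objectives[OF assms(1)]) auto
  ultimately show ?thesis
    using x_eq by (intro bexI[of _ "1/4 - 3/4 * a g"]) auto
qed

theorem proposition7p4:
  fixes w :: "'v::finite \<Rightarrow> 'v \<Rightarrow> real"
  assumes "weighted_graph w"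
  shows "A_val w = Sup {edge_exp w (\<lambda>u v. 1/4 - 3/4 * (f u \<bullet> f v)) |
                          (f :: 'v \<Rightarrow> real^'v). \<forall>v. f v \<in> sphere 0 1}"
proof -
  have bdd_unit: "bdd_above (unit_objectives w)"
    using unit_objectives_le_1[OF assms] by (rule bdd_aboveI)
  have bdd_triple: "bdd_above (triple_objectives w)"
    using bdd_unit triple_objectives_dominated[OF assms] unfolding bdd_above_def
    by (meson order.trans)
  have "Sup (triple_objectives w) \<le> Sup (unit_objectives w)"
    using unit_objectives_nonempty[OF assms] unit_objectives_subset_triple_objectives
    by (intro cSup_mono bdd_unit triple_objectives_dominated[OF assms]) auto
  moreover have "Sup (unit_objectives w) \<le> Sup (triple_objectives w)"
    using unit_objectives_nonempty[OF assms] unit_objectives_subset_triple_objectives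
    by (intro cSup_subset_mono bdd_triple)
  ultimately show ?thesis
    unfolding A_val_def triple_objectives_def[symmetric] unit_objectives_def[symmetric]
    by simp
qed

end
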